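(* Let $K,T\subset\mathbb{R}^n$ be convex bodies and let $q=(q_1,\dots,q_m)$ be a closed $(K,T)$-Minkowski billiard trajectory with respect to the $K$-supporting hyperplanes $H_1,\dots,H_m$. Let $U$ be the inclusion-minimal linear subspace of $\mathbb{R}^n$ containing the outer unit normal vectors $n_K(q_1),\dots,n_K(q_m)$ normal to $H_1,\dots,H_m$. Then there is a selection $\{i_1,\dots,i_{\dim U+1}\}\subseteq\{1,\dots,m\}$ such that $\{q_{i_1},\dots,q_{i_{\dim U+1}}\}\in F(K)$.
   Context: A convex body is a compact convex set in $\mathbb{R}^n$ containing the origin in its interior. For a convex body $K$, $F(K)$ denotes the set of subsets of $\mathbb{R}^n$ which cannot be translated into the interior of $K$. For a convex set $C$ and $z\in\partial C$, $N_C(z)=\{v:\langle v,y-z\rangle\le 0\ \forall y\in C\}$. A closed polygonal curve $(q_1,\dots,q_m)$, $m\ge2$, always satisfies $q_j\ne q_{j+1}$ and $q_j\notin[q_{j-1},q_{j+1}]$ (indices mod $m$). A closed polygonal curve $q$ with vertices on $\partial K$ is a closed $(K,T)$-Minkowski billiard trajectory with respect to the $K$-supporting hyperplanes $H_1,\dots,H_m$ through $q_1,\dots,q_m$ if there are $p_1,\dots,p_m\in\partial T$, outer unit normals $n_K(q_j)\in N_K(q_j)$ normal to $H_j$, and $\mu_j\ge 0$ with $q_{j+1}-q_j\in N_T(p_j)$ and $p_{j+1}-p_j=-\mu_{j+1}n_K(q_{j+1})$ for all $j$. *)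

theory Defs
  imports "HOL-Analysis.Analysis"
begin

definition convex_body :: "'a::euclidean_space set \<Rightarrow> bool" where
  "convex_body K \<longleftrightarrow> compact K \<and> convex K \<and> 0 \<in> interior K"

definition Fset :: "'a::euclidean_space set \<Rightarrow> 'a set set" where
  "Fset K = {S. \<not> (\<exists>t. (\<lambda>x. x + t) ` S \<subseteq> interior K)}"

definition normal_cone :: "'a::euclidean_space set \<Rightarrow> 'a \<Rightarrow> 'a set" where
  "normal_cone C z = {v. \<forall>y\<in>C. v \<bullet> (y - z) \<le> 0}"

definition closed_polygonal_curve :: "nat \<Rightarrow> (nat \<Rightarrow> 'a::euclidean_space) \<Rightarrow> bool" where
  "closed_polygonal_curve m q \<longleftrightarrow> m \<ge> 2 \<and>
     (\<forall>j<m. q j \<noteq> q ((j + 1) mod m) \<and>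
            q j \<notin> closed_segment (q ((j + m - 1) mod m)) (q ((j + 1) mod m)))"

text \<open>Closed (K,T)-Minkowski billiard trajectory q with respect to the K-supporting
  hyperplanes H 0, ..., H (m-1), where nK j is the chosen outer unit normal at q j
  normal to H j.\<close>
definition minkowski_billiard ::
  "'a::euclidean_space set \<Rightarrow> 'a set \<Rightarrow> nat \<Rightarrow> (nat \<Rightarrow> 'a) \<Rightarrow> (nat \<Rightarrow> 'a set) \<Rightarrow> (nat \<Rightarrow> 'a) \<Rightarrow> bool"
where
  "minkowski_billiard K T m q H nK \<longleftrightarrow>
     closed_polygonal_curve m q \<and>
     (\<forall>j<m. q j \<in> frontier K) \<and>
     (\<forall>j<m. norm (nK j) = 1 \<and> nK j \<in> normal_cone K (q j) \<and>
            H j = {x. nK j \<bullet> x = nK j \<bullet> q j} \<and> K \<subseteq> {x. nK j \<bullet> x \<le> nK j \<bullet> q j}) \<and>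
     (\<exists>p \<mu>. (\<forall>j<m. p j \<in> frontier T \<and> \<mu> j \<ge> (0::real) \<and>
              q ((j + 1) mod m) - q j \<in> normal_cone T (p j) \<and>
              p ((j + 1) mod m) - p j = - (\<mu> ((j + 1) mod m) *\<^sub>R nK ((j + 1) mod m))))"

end

theory Submission
  imports Defs
begin

text \<open>Telescoping the dual polygon p shows that the normals, weighted by the nonnegative
  coefficients \<mu>, sum to 0; the weights cannot all vanish, since then p would be a single
  point of T at which every edge of the closed curve q lies in the normal cone, and these
  edges sum to 0. Hence 0 lies in the convex hull of the normals with positive weight, and by
  Caratheodory already in the convex hull of at most dim U + 1 of them. A translation t
  moving the corresponding vertices into the interior of K would satisfy nK j \<bullet> t < 0 for
  all of these normals, which is impossible for a convex combination equal to 0.\<close>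

lemma sum_cyclic_shift:
  fixes f :: "nat \<Rightarrow> 'b::comm_monoid_add"
  assumes "m > 0"
  shows "(\<Sum>j<m. f ((j + 1) mod m)) = (\<Sum>j<m. f j)"
proof -
  obtain k where k: "m = Suc k" using assms by (cases m) auto
  have "(\<Sum>j<Suc k. f ((j + 1) mod Suc k)) = (\<Sum>j<k. f ((j + 1) mod Suc k)) + f 0"
    by (simp add: sum.lessThan_Suc)
  also have "(\<Sum>j<k. f ((j + 1) mod Suc k)) = (\<Sum>j<k. f (Suc j))"
    by (rule sum.cong) auto
  also have "(\<Sum>j<k. f (Suc j)) + f 0 = (\<Sum>j<Suc k. f j)"
    by (subst sum.lessThan_Suc_shift) (simp add: add.commute)
  finally show ?thesis using k by simp
qed

lemma sum_cyclic_differences: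
  fixes f :: "nat \<Rightarrow> 'b::ab_group_add"
  assumes "m > 0"
  shows "(\<Sum>j<m. f ((j + 1) mod m) - f j) = 0"
  using sum_cyclic_shift[OF assms, of f] by (simp add: sum_subtractf)

lemma cyclic_constant:
  fixes m :: nat
  assumes "\<And>j. j < m \<Longrightarrow> f ((j + 1) mod m) = f j"
  shows "j < m \<Longrightarrow> f j = f 0"
proof (induction j)
  case (Suc j)
  then have "f (Suc j) = f ((j + 1) mod m)" by simp
  also have "\<dots> = f j" using Suc.prems by (intro assms(1)) simp
  finally show ?case using Suc by simp
qed simp

lemma normal_cone_inner_ge:
  fixes T :: "'a::euclidean_space set"
  assumes "cball 0 r \<subseteq> T" "r > 0" "v \<in> normal_cone T p"
  shows "r * norm v \<le> v \<bullet> p"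
proof (cases "v = 0")
  case False
  define y where "y = (r / norm v) *\<^sub>R v"
  have "y \<in> T" using False assms(1,2) by (auto simp: y_def)
  then have "v \<bullet> (y - p) \<le> 0" using assms(3) by (auto simp: normal_cone_def)
  moreover have "v \<bullet> y = r * norm v"
    using False by (simp add: y_def power2_norm_eq_inner[symmetric] power2_eq_square)
  ultimately show ?thesis by (simp add: inner_diff_right)
qed simp

lemma closed_curve_not_in_normal_cone:
  fixes T :: "'a::euclidean_space set" and q :: "nat \<Rightarrow> 'a"
  assumes "0 \<in> interior T" "m > 0" "q 0 \<noteq> q (1 mod m)"
    and "\<And>j. j < m \<Longrightarrow> q ((j + 1) mod m) - q j \<in> normal_cone T p"
  shows False
proof -
  obtain r where r: "r > 0" "cball 0 r \<subseteq> T"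
    using assms(1) by (meson mem_interior_cball)
  define v where "v j = q ((j + 1) mod m) - q j" for j
  have "(\<Sum>j<m. r * norm (v j)) \<le> (\<Sum>j<m. v j \<bullet> p)"
    using normal_cone_inner_ge[OF r(2,1) assms(4)] by (intro sum_mono) (simp add: v_def)
  also have "\<dots> = (\<Sum>j<m. v j) \<bullet> p" by (simp add: inner_sum_left)
  also have "\<dots> = 0" using sum_cyclic_differences[OF assms(2), of q] by (simp add: v_def)
  finally have "(\<Sum>j<m. r * norm (v j)) \<le> 0" .
  moreover have "r * norm (v 0) \<le> (\<Sum>j<m. r * norm (v j))"
    using assms(2) r(1) by (intro member_le_sum) auto
  moreover have "v 0 \<noteq> 0" using assms(3) by (simp add: v_def)
  ultimately show False using r(1) by (smt (verit) mult_pos_pos zero_less_norm_iff)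
qed

lemma minkowski_billiard_normals_balance:
  assumes "0 \<in> interior T" and "minkowski_billiard K T m q H nK"
  obtains \<mu> where "\<forall>j<m. 0 \<le> \<mu> j" "\<exists>j<m. 0 < \<mu> j" "(\<Sum>j<m. \<mu> j *\<^sub>R nK j) = 0"
proof -
  note billiard = assms(2)[unfolded minkowski_billiard_def closed_polygonal_curve_def]
  then have m: "m > 0" by simp
  obtain p \<mu> where p\<mu>: "\<And>j. j < m \<Longrightarrow> \<mu> j \<ge> (0::real) \<and>
      q ((j + 1) mod m) - q j \<in> normal_cone T (p j) \<and>
      p ((j + 1) mod m) - p j = - (\<mu> ((j + 1) mod m) *\<^sub>R nK ((j + 1) mod m))"
    using billiard by blast
  have "(\<Sum>j<m. \<mu> j *\<^sub>R nK j) = (\<Sum>j<m. \<mu> ((j + 1) mod m) *\<^sub>R nK ((j + 1) mod m))"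
    using sum_cyclic_shift[OF m, of "\<lambda>j. \<mu> j *\<^sub>R nK j"] by simp
  also have "\<dots> = - (\<Sum>j<m. p ((j + 1) mod m) - p j)"
    using p\<mu> by (simp add: sum_negf[symmetric])
  also have "\<dots> = 0" using sum_cyclic_differences[OF m, of p] by simp
  finally have balance: "(\<Sum>j<m. \<mu> j *\<^sub>R nK j) = 0" .
  have "\<exists>j<m. 0 < \<mu> j"
  proof (rule ccontr)
    assume "\<not> ?thesis"
    then have "\<And>j. j < m \<Longrightarrow> \<mu> j = 0" using p\<mu> by force
    then have "\<And>j. j < m \<Longrightarrow> p ((j + 1) mod m) = p j" using p\<mu> m by fastforce
    then have "\<And>j. j < m \<Longrightarrow> q ((j + 1) mod m) - q j \<in> normal_cone T (p 0)"
      using p\<mu> cyclic_constant by metis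
    moreover have "q 0 \<noteq> q (1 mod m)" using billiard by fastforce
    ultimately show False using closed_curve_not_in_normal_cone[OF assms(1) m] by blast
  qed
  with p\<mu> balance that show ?thesis by blast
qed

lemma zero_in_convex_hull_of_positive_combination:
  fixes v :: "'i \<Rightarrow> 'a::real_vector"
  assumes "finite A" "A \<noteq> {}" "\<And>j. j \<in> A \<Longrightarrow> 0 < \<mu> j" "(\<Sum>j\<in>A. \<mu> j *\<^sub>R v j) = 0"
  shows "0 \<in> convex hull (v ` A)"
proof -
  define M where "M = (\<Sum>j\<in>A. \<mu> j)"
  have "M > 0" unfolding M_def using assms(1-3) by (simp add: sum_pos)
  have "(\<Sum>j\<in>A. (\<mu> j / M) *\<^sub>R v j) \<in> convex hull (v ` A)"
  proof (rule convex_sum[OF assms(1) convex_convex_hull])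
    show "(\<Sum>j\<in>A. \<mu> j / M) = 1" using \<open>M > 0\<close> by (simp add: M_def sum_divide_distrib[symmetric])
  qed (use \<open>M > 0\<close> assms(3) in \<open>auto simp: hull_inc less_imp_le\<close>)
  moreover have "(\<Sum>j\<in>A. (\<mu> j / M) *\<^sub>R v j) = (1 / M) *\<^sub>R (\<Sum>j\<in>A. \<mu> j *\<^sub>R v j)"
    by (simp add: scaleR_sum_right)
  ultimately show ?thesis using assms(4) by simp
qed

lemma caratheodory_image:
  fixes f :: "'i \<Rightarrow> 'a::euclidean_space"
  assumes "x \<in> convex hull (f ` A)"
  obtains B where "B \<subseteq> A" "card B \<le> aff_dim (f ` A) + 1" "x \<in> convex hull (f ` B)"
proof -
  obtain S where S: "S \<subseteq> f ` A" "card S \<le> aff_dim (f ` A) + 1" "x \<in> convex hull S"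
    using assms caratheodory_aff_dim[of "f ` A"] by blast
  define B where "B = inv_into A f ` S"
  show ?thesis
  proof (rule that)
    show "B \<subseteq> A" using S(1) by (auto simp: B_def inv_into_into)
    have "card B = card S"
      unfolding B_def by (rule card_image[OF inj_on_inv_into[OF S(1)]])
    then show "card B \<le> aff_dim (f ` A) + 1" using S(2) by simp
    have "f ` B = S" using S(1) by (force simp: B_def image_image f_inv_into_f)
    then show "x \<in> convex hull (f ` B)" using S(3) by simp
  qed
qed

lemma dim_span_image_less_card:
  fixes v :: "'i \<Rightarrow> 'a::euclidean_space"
  assumes "finite I" "(\<Sum>i\<in>I. c i *\<^sub>R v i) = 0" "i0 \<in> I" "c i0 \<noteq> 0"
  shows "dim (span (v ` I)) < card I"
proof (rule ccontr)
  assume "\<not> ?thesis"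
  moreover have "dim (span (v ` I)) \<le> card (v ` I)" using assms(1) by (simp add: dim_le_card')
  moreover have "card (v ` I) \<le> card I" using assms(1) by (rule card_image_le)
  ultimately have eq: "card (v ` I) = card I" "dim (span (v ` I)) = card (v ` I)" by auto
  then have inj: "inj_on v I" using assms(1) by (simp add: eq_card_imp_inj_on)
  have "independent (v ` I)"
    using card_eq_dim[of "v ` I" "span (v ` I)"] eq(2) assms(1) by (simp add: span_superset)
  moreover define u where "u w = c (the_inv_into I v w)" for w
  have "(\<Sum>w\<in>v ` I. u w *\<^sub>R w) = (\<Sum>i\<in>I. c i *\<^sub>R v i)"
    by (simp add: sum.reindex[OF inj] u_def the_inv_into_f_f[OF inj])
  moreover have "u (v i0) \<noteq> 0" using assms(3,4) by (simp add: u_def the_inv_into_f_f[OF inj])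
  ultimately show False using dependent_finite[of "v ` I"] assms(1-3) by auto
qed

lemma Fset_if_zero_in_convex_hull_of_normals:
  fixes K :: "'a::euclidean_space set" and n q :: "'i \<Rightarrow> 'a"
  assumes "\<And>j. j \<in> J \<Longrightarrow> n j \<noteq> 0 \<and> K \<subseteq> {x. n j \<bullet> x \<le> n j \<bullet> q j}"
    and "0 \<in> convex hull (n ` J)"
  shows "q ` J \<in> Fset K"
  unfolding Fset_def
proof clarify
  fix t assume moved: "(\<lambda>x. x + t) ` q ` J \<subseteq> interior K"
  have "n ` J \<subseteq> {x. t \<bullet> x < 0}"
  proof clarify
    fix j assume j: "j \<in> J"
    have "q j + t \<in> interior K" using moved j by blast
    also have "\<dots> \<subseteq> interior {x. n j \<bullet> x \<le> n j \<bullet> q j}"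
      using assms(1)[OF j] by (intro interior_mono) auto
    also have "\<dots> = {x. n j \<bullet> x < n j \<bullet> q j}" using assms(1)[OF j] by simp
    finally show "t \<bullet> n j < 0" by (simp add: inner_add_right inner_commute)
  qed
  then have "convex hull (n ` J) \<subseteq> {x. t \<bullet> x < 0}"
    by (rule hull_minimal) (rule convex_halfspace_lt)
  then show False using assms(2) by auto
qed

lemma zero_in_convex_hull_subset_card_dim:
  fixes v :: "'i \<Rightarrow> 'a::euclidean_space"
  assumes "finite N" "\<forall>j\<in>N. 0 \<le> \<mu> j" "\<exists>j\<in>N. 0 < \<mu> j" "(\<Sum>j\<in>N. \<mu> j *\<^sub>R v j) = 0"
  obtains I where "I \<subseteq> N" "card I = dim (span (v ` N)) + 1" "0 \<in> convex hull (v ` I)"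
proof -
  define d where "d = dim (span (v ` N))"
  define A where "A = {j \<in> N. 0 < \<mu> j}"
  have "(\<Sum>j\<in>A. \<mu> j *\<^sub>R v j) = (\<Sum>j\<in>N. \<mu> j *\<^sub>R v j)"
    by (rule sum.mono_neutral_left) (use assms(1,2) in \<open>auto simp: A_def less_le\<close>)
  then have "(\<Sum>j\<in>A. \<mu> j *\<^sub>R v j) = 0" using assms(4) by simp
  then have "0 \<in> convex hull (v ` A)"
    using assms(1,3) by (intro zero_in_convex_hull_of_positive_combination) (auto simp: A_def)
  then obtain I0 where I0: "I0 \<subseteq> A" "card I0 \<le> aff_dim (v ` A) + 1" "0 \<in> convex hull (v ` I0)"
    by (rule caratheodory_image)
  have "aff_dim (v ` A) \<le> aff_dim (span (v ` N))"
    by (rule aff_dim_subset) (auto simp: A_def intro: span_base)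
  then have "card I0 \<le> d + 1" using I0(2) by (simp add: aff_dim_subspace d_def)
  moreover obtain j0 where "j0 \<in> N" "0 < \<mu> j0" using assms(3) by blast
  then have "d < card N" using dim_span_image_less_card[of N \<mu> v j0] assms(1,4) by (simp add: d_def)
  ultimately obtain I where I: "I0 \<subseteq> I" "I \<subseteq> N" "card I = d + 1"
    using exists_subset_between[of I0 "d + 1" N] I0(1) assms(1) by (auto simp: A_def)
  have "0 \<in> convex hull (v ` I)" using I0(3) I(1) by (meson hull_mono image_mono subsetD)
  with I(2,3) that show ?thesis by (simp add: d_def)
qed

theorem proposition3p10:
  fixes K T :: "'a::euclidean_space set" and q nK :: "nat \<Rightarrow> 'a"
    and H :: "nat \<Rightarrow> 'a set" and m :: nat
  assumes "convex_body K" and "convex_body T"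
    and "minkowski_billiard K T m q H nK"
  shows "\<exists>I. I \<subseteq> {..<m} \<and> card I = dim (span (nK ` {..<m})) + 1 \<and> q ` I \<in> Fset K"
proof -
  have supporting: "\<And>j. j < m \<Longrightarrow> nK j \<noteq> 0 \<and> K \<subseteq> {x. nK j \<bullet> x \<le> nK j \<bullet> q j}"
    using assms(3) unfolding minkowski_billiard_def by (metis norm_zero zero_neq_one)
  have "0 \<in> interior T" using assms(2) by (simp add: convex_body_def)
  then obtain \<mu> where \<mu>: "\<forall>j<m. 0 \<le> \<mu> j" "\<exists>j<m. 0 < \<mu> j" "(\<Sum>j<m. \<mu> j *\<^sub>R nK j) = 0"
    using assms(3) by (rule minkowski_billiard_normals_balance)
  then obtain I where I: "I \<subseteq> {..<m}" "card I = dim (span (nK ` {..<m})) + 1"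
      "0 \<in> convex hull (nK ` I)"
    by (auto intro: zero_in_convex_hull_subset_card_dim[of "{..<m}" \<mu> nK])
  then have "q ` I \<in> Fset K"
    using supporting by (intro Fset_if_zero_in_convex_hull_of_normals) auto
  with I show ?thesis by blast
qed

end
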